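(* Let $\pi_1$ and $\mu_1$ be probability densities on $\mathbb{R}^d$ with $\pi_1(x)>0$ for all $x$, and assume $D_{\mathrm{KL}}(\mu_1\|\pi_1)<\infty$. Let $\lambda_0,\lambda_1>0$. For probability densities $P$ on $\mathbb{R}^d$ define $$\mathcal{L}_J[P]=\lambda_0\, D_{\mathrm{KL}}(P\|\pi_1)+\lambda_1\, D_{\mathrm{KL}}(\mu_1\|P)\in[0,\infty].$$ Then: (1) $\mathcal{L}_J$ is strictly convex on the convex set of probability densities $P$ with $\mathcal{L}_J[P]<\infty$, and $\mathcal{L}_J$ admits a unique global minimizer $P_*$ among all probability densities on $\mathbb{R}^d$; (2) the minimizer satisfies $D_{\mathrm{KL}}(P_*\|\pi_1)\leqslant D_{\mathrm{KL}}(\mu_1\|\pi_1)$.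
   Context: For probability densities $P,Q$ on $\mathbb{R}^d$, $D_{\mathrm{KL}}(P\|Q)=\int P(x)\log\frac{P(x)}{Q(x)}\,dx$ (with the usual conventions, equal to $+\infty$ if $P$ is not absolutely continuous with respect to $Q$). In the paper, $P$ plays the role of the pushforward density $F_\#\pi_0$ of an exact base distribution under a normalizing flow $F$, and $\mu_1$ is an imperfect approximation of the target $\pi_1$; $\mathcal{L}_J$ is (up to a $P$-independent constant) the weighted Jeffreys divergence training objective. *)

theory Defs
  imports "HOL-Analysis.Analysis"
begin

definition prob_density :: "('a::euclidean_space \<Rightarrow> real) \<Rightarrow> bool" where
  "prob_density f \<longleftrightarrow> f \<in> borel_measurable lborel \<and> (\<forall>x. 0 \<le> f x)
     \<and> (\<integral>\<^sup>+ x. ennreal (f x) \<partial>lborel) = 1"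

text \<open>Kullback--Leibler divergence of densities, with value in [0,\<infinity>]:
  \<infinity> if P is not absolutely continuous w.r.t. Q, otherwise the integral of
  P log(P/Q) (positive part minus negative part; the negative part is finite
  for probability densities). Convention 0 log(0/q) = 0 holds since 0 * _ = 0.\<close>
definition KL :: "('a::euclidean_space \<Rightarrow> real) \<Rightarrow> ('a \<Rightarrow> real) \<Rightarrow> ereal" where
  "KL P Q = (if AE x in lborel. Q x = 0 \<longrightarrow> P x = 0
     then enn2ereal (\<integral>\<^sup>+ x. ennreal (P x * ln (P x / Q x)) \<partial>lborel)
        - enn2ereal (\<integral>\<^sup>+ x. ennreal (- (P x * ln (P x / Q x))) \<partial>lborel)
     else \<infinity>)"

definition LJ :: "real \<Rightarrow> real \<Rightarrow> ('a::euclidean_space \<Rightarrow> real) \<Rightarrow> ('a \<Rightarrow> real)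
    \<Rightarrow> ('a \<Rightarrow> real) \<Rightarrow> ereal" where
  "LJ lam0 lam1 pi1 mu1 P = ereal lam0 * KL P pi1 + ereal lam1 * KL mu1 P"

end

theory Submission
  imports Defs
begin

text \<open>
  Write \<open>a = lam1 / lam0\<close>. For a real \<open>s\<close>, minimising the convex function
  \<open>q \<mapsto> q ln (q / pi1 x) + a mu1 x ln (mu1 x / q) - (s + 1) q\<close> pointwise leads to the
  unique positive root \<open>p = P\<^sub>s x\<close> of \<open>ln (p / pi1 x) - a mu1 x / p = s\<close>. The mass of
  \<open>P\<^sub>s\<close> is monotone and locally Lipschitz in \<open>s\<close>, at least 1 for \<open>s = 0\<close> and at most 1
  for \<open>s\<close> very negative, so some \<open>P\<^sub>s\<close> is a probability density \<open>P\<^sub>*\<close>. Integrating the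
  supporting-line inequality of the integrand at \<open>P\<^sub>* x\<close> against any competitor of unit
  mass shows that \<open>P\<^sub>*\<close> minimises the objective. Strict convexity of \<open>q ln (q / pi1 x)\<close>
  makes the objective strictly convex, hence the minimiser unique, and comparing with
  the competitor \<open>mu1\<close>, for which the second divergence vanishes, bounds
  \<open>KL P\<^sub>* pi1\<close> by \<open>KL mu1 pi1\<close>.
\<close>

lemma xlog_ge_diff:
  fixes u m :: real
  assumes "0 \<le> u" "0 < m"
  shows "u - m \<le> u * ln (u / m)"
proof (cases "u = 0")
  case False
  with assms have "0 < u" by simp
  with ln_diff_le[OF \<open>0 < m\<close> this] \<open>0 < m\<close> show ?thesis
    by (simp add: ln_div field_simps)
qed (use assms in simp)

lemma xlog_gt_diff:
  fixes u m :: real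
  assumes "0 \<le> u" "0 < m" "u \<noteq> m"
  shows "u - m < u * ln (u / m)"
proof (cases "u = 0")
  case False
  with assms have "0 < u" by simp
  with ln_diff_less[OF \<open>0 < m\<close> this] assms(2,3) show ?thesis
    by (simp add: ln_div field_simps)
qed (use assms in simp)

lemma xlog_self: "u * ln (u / u) = (0::real)"
  by (cases "u = 0") simp_all

lemma xlog_split:
  fixes u p c :: real
  assumes "0 \<le> u" "0 < p" "0 < c"
  shows "u * ln (u / c) = u * ln (p / c) + u * ln (u / p)"
  using assms by (cases "u = 0") (simp_all add: ln_div algebra_simps)

lemma xlog_support:
  fixes u p c :: real
  assumes "0 \<le> u" "0 < p" "0 < c"
  shows "p * ln (p / c) + (ln (p / c) + 1) * (u - p) \<le> u * ln (u / c)"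
  using xlog_split[OF assms] xlog_ge_diff[OF assms(1,2)] by (simp add: algebra_simps)

lemma xlog_support_strict:
  fixes u p c :: real
  assumes "0 \<le> u" "0 < p" "0 < c" "u \<noteq> p"
  shows "p * ln (p / c) + (ln (p / c) + 1) * (u - p) < u * ln (u / c)"
  using xlog_split[OF assms(1-3)] xlog_gt_diff[OF assms(1,2,4)] by (simp add: algebra_simps)

lemma xlog_denominator_support:
  fixes m p q :: real
  assumes "0 \<le> m" "0 < p" "0 \<le> q" "q = 0 \<longrightarrow> m = 0"
  shows "m * ln (m / p) - m / p * (q - p) \<le> m * ln (m / q)"
proof (cases "m = 0")
  case False
  with assms have "0 < m" "0 < q" by auto
  have "m * (ln q - ln p) \<le> m * ((q - p) / p)"
    using ln_diff_le[OF \<open>0 < q\<close> \<open>0 < p\<close>] \<open>0 < m\<close> by (intro mult_left_mono) auto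
  with \<open>0 < m\<close> \<open>0 < p\<close> \<open>0 < q\<close> show ?thesis
    by (simp add: ln_div algebra_simps)
qed simp

lemma xlog_strictly_convex:
  fixes p q t c :: real
  assumes "0 \<le> p" "0 \<le> q" "0 < t" "t < 1" "0 < c" "p \<noteq> q"
  defines "r \<equiv> t * p + (1 - t) * q"
  shows "r * ln (r / c) < t * (p * ln (p / c)) + (1 - t) * (q * ln (q / c))"
proof -
  have "0 < p \<or> 0 < q"
    using assms by auto
  then have "0 < r"
    using assms by (auto simp: r_def intro: add_pos_nonneg add_nonneg_pos)
  have "r - p = (1 - t) * (q - p)"
    by (simp add: r_def algebra_simps)
  then have "p \<noteq> r"
    using assms(4,6) by auto
  have "t * (r * ln (r / c) + (ln (r / c) + 1) * (p - r)) < t * (p * ln (p / c))"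
    using xlog_support_strict[OF assms(1) \<open>0 < r\<close> assms(5) \<open>p \<noteq> r\<close>] assms(3)
    by (rule mult_strict_left_mono)
  moreover have "(1 - t) * (r * ln (r / c) + (ln (r / c) + 1) * (q - r)) \<le> (1 - t) * (q * ln (q / c))"
    using assms(4) by (intro mult_left_mono[OF xlog_support[OF assms(2) \<open>0 < r\<close> assms(5)]]) simp
  moreover have "t * (r * ln (r / c) + (ln (r / c) + 1) * (p - r))
      + (1 - t) * (r * ln (r / c) + (ln (r / c) + 1) * (q - r)) = r * ln (r / c)"
    by (simp add: r_def algebra_simps)
  ultimately show ?thesis
    by linarith
qed

lemma xlog_convex:
  fixes p q t c :: real
  assumes "0 \<le> p" "0 \<le> q" "0 < t" "t < 1" "0 < c"
  defines "r \<equiv> t * p + (1 - t) * q"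
  shows "r * ln (r / c) \<le> t * (p * ln (p / c)) + (1 - t) * (q * ln (q / c))"
proof (cases "p = q")
  case True
  then show ?thesis
    by (simp add: r_def algebra_simps)
next
  case False
  with xlog_strictly_convex[OF assms(1-5)] show ?thesis
    by (simp add: r_def)
qed

lemma xlog_denominator_convex:
  fixes m p q t :: real
  assumes "0 \<le> m" "0 < p" "0 < q" "0 < t" "t < 1"
  defines "r \<equiv> t * p + (1 - t) * q"
  shows "m * ln (m / r) \<le> t * (m * ln (m / p)) + (1 - t) * (m * ln (m / q))"
proof -
  have "0 < r"
    using assms by (simp add: r_def add_pos_pos)
  have "m * ln (m / r) = m * ln (m / r) - m / r * (t * (p - r) + (1 - t) * (q - r))"
    by (simp add: r_def algebra_simps)
  also have "\<dots> = t * (m * ln (m / r) - m / r * (p - r))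
      + (1 - t) * (m * ln (m / r) - m / r * (q - r))"
    by algebra
  also have "\<dots> \<le> t * (m * ln (m / p)) + (1 - t) * (m * ln (m / q))"
    using assms(1-5) xlog_denominator_support[OF assms(1) \<open>0 < r\<close>]
    by (intro add_mono mult_left_mono) auto
  finally show ?thesis .
qed

section \<open>The pointwise stationary point\<close>

text \<open>\<open>stationarity a c m p + 1\<close> is the derivative at \<open>p\<close> of
  \<open>q \<mapsto> q ln (q / c) + a m ln (m / q)\<close>.\<close>

definition stationarity :: "real \<Rightarrow> real \<Rightarrow> real \<Rightarrow> real \<Rightarrow> real" where
  "stationarity a c m p = ln p - ln c - a * m / p"

definition stationary_point :: "real \<Rightarrow> real \<Rightarrow> real \<Rightarrow> real \<Rightarrow> real" where
  "stationary_point a c m s = (THE p. 0 < p \<and> stationarity a c m p = s)"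

lemma jeffreys_integrand_support:
  fixes a c m p q :: real
  assumes "0 \<le> a" "0 < c" "0 \<le> m" "0 < p" "0 \<le> q" "q = 0 \<longrightarrow> m = 0"
  shows "p * ln (p / c) + a * (m * ln (m / p)) + (stationarity a c m p + 1) * (q - p)
    \<le> q * ln (q / c) + a * (m * ln (m / q))"
proof -
  have "p * ln (p / c) + (ln p - ln c + 1) * (q - p) \<le> q * ln (q / c)"
    using xlog_support[OF assms(5,4,2)] assms(2,4) by (simp add: ln_div)
  moreover have "a * (m * ln (m / p)) - a * (m / p * (q - p)) \<le> a * (m * ln (m / q))"
    using mult_left_mono[OF xlog_denominator_support[OF assms(3-6)] assms(1)]
    by (simp add: right_diff_distrib)
  moreover have "(stationarity a c m p + 1) * (q - p) = (ln p - ln c + 1) * (q - p) - a * (m / p * (q - p))"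
    by (simp add: stationarity_def algebra_simps)
  ultimately show ?thesis
    by linarith
qed

context
  fixes a c m :: real
  assumes a: "0 \<le> a" and c: "0 < c" and m: "0 \<le> m"
begin

lemma stationarity_strict_mono:
  assumes "0 < p" "p < q"
  shows "stationarity a c m p < stationarity a c m q"
proof -
  have "a * m / q \<le> a * m / p"
    using assms a m by (intro divide_left_mono) auto
  moreover have "ln p < ln q"
    using assms by simp
  ultimately show ?thesis
    by (simp add: stationarity_def)
qed

lemma stationarity_root_exists:
  "\<exists>p. c * exp s \<le> p \<and> p \<le> c * exp (s + 1) + a * m \<and> stationarity a c m p = s"
proof -
  define lo where "lo = c * exp s"
  define hi where "hi = c * exp (s + 1) + a * m"
  have "0 < lo" "0 \<le> a * m"
    using a c m by (simp_all add: lo_def)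
  have "c * exp s \<le> c * exp (s + 1)"
    using c by simp
  then have "lo \<le> hi"
    using \<open>0 \<le> a * m\<close> by (simp add: lo_def hi_def)
  have "stationarity a c m lo \<le> s"
    using \<open>0 < lo\<close> \<open>0 \<le> a * m\<close> c by (simp add: stationarity_def lo_def ln_mult)
  moreover have "s \<le> stationarity a c m hi"
  proof -
    have "0 < c * exp (s + 1)" "c * exp (s + 1) \<le> hi"
      using c \<open>0 \<le> a * m\<close> by (simp_all add: hi_def)
    then have "ln (c * exp (s + 1)) \<le> ln hi" and "a * m / hi \<le> 1"
      using \<open>0 \<le> a * m\<close> by (simp_all add: hi_def divide_le_eq)
    moreover have "ln (c * exp (s + 1)) = ln c + s + 1"
      using c by (simp add: ln_mult)
    ultimately show ?thesis
      by (simp add: stationarity_def)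
  qed
  moreover have "continuous_on {lo..hi} (stationarity a c m)"
    unfolding stationarity_def[abs_def] using \<open>0 < lo\<close> by (auto intro!: continuous_intros)
  ultimately show ?thesis
    using IVT'[of "stationarity a c m" lo s hi] \<open>lo \<le> hi\<close> unfolding lo_def hi_def by blast
qed

lemma
  shows stationary_point_pos: "0 < stationary_point a c m s"
    and stationarity_stationary_point: "stationarity a c m (stationary_point a c m s) = s"
    and stationary_point_lower: "c * exp s \<le> stationary_point a c m s"
    and stationary_point_upper: "stationary_point a c m s \<le> c * exp (s + 1) + a * m"
proof -
  obtain p where p: "c * exp s \<le> p" "p \<le> c * exp (s + 1) + a * m" "stationarity a c m p = s"
    using stationarity_root_exists by blast
  have "0 < c * exp s"
    using c by simp
  with p(1) have "0 < p"
    by linarith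
  have "stationary_point a c m s = p"
    unfolding stationary_point_def
  proof (rule the_equality)
    show "0 < p \<and> stationarity a c m p = s"
      using \<open>0 < p\<close> p(3) by simp
    fix q assume "0 < q \<and> stationarity a c m q = s"
    with \<open>0 < p\<close> p(3) show "q = p"
      by (metis linorder_neqE_linordered_idom order_less_irrefl stationarity_strict_mono)
  qed
  with p \<open>0 < p\<close> show "0 < stationary_point a c m s"
    "stationarity a c m (stationary_point a c m s) = s"
    "c * exp s \<le> stationary_point a c m s"
    "stationary_point a c m s \<le> c * exp (s + 1) + a * m"
    by simp_all
qed

lemma stationary_point_le_iff:
  assumes "0 < q"
  shows "stationary_point a c m s \<le> q \<longleftrightarrow> s \<le> stationarity a c m q"
proof
  assume "stationary_point a c m s \<le> q"
  then show "s \<le> stationarity a c m q"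
    using stationarity_strict_mono[OF stationary_point_pos, of s q] stationarity_stationary_point[of s]
    by (cases "stationary_point a c m s = q") auto
next
  assume "s \<le> stationarity a c m q"
  then show "stationary_point a c m s \<le> q"
    using stationarity_strict_mono[OF assms, of "stationary_point a c m s"]
      stationarity_stationary_point[of s]
    by force
qed

lemma stationary_point_mono:
  "s \<le> s' \<Longrightarrow> stationary_point a c m s \<le> stationary_point a c m s'"
  by (simp add: stationary_point_le_iff stationary_point_pos stationarity_stationary_point)

lemma stationary_point_increment:
  assumes "s \<le> s'"
  shows "stationary_point a c m s' - stationary_point a c m s
    \<le> stationary_point a c m s' * (s' - s)"
proof -
  define p p' where "p = stationary_point a c m s" and "p' = stationary_point a c m s'"
  have "0 < p" "0 < p'" "p \<le> p'"
    using stationary_point_pos stationary_point_mono[OF assms] by (simp_all add: p_def p'_def)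
  have "a * m / p' \<le> a * m / p"
    using a m \<open>0 < p\<close> \<open>p \<le> p'\<close> by (intro divide_left_mono) auto
  then have "ln p' - ln p \<le> s' - s"
    using stationarity_stationary_point[of s] stationarity_stationary_point[of s']
    by (simp add: stationarity_def p_def p'_def)
  moreover have "ln p - ln p' \<le> (p - p') / p'"
    using ln_diff_le[OF \<open>0 < p\<close> \<open>0 < p'\<close>] .
  moreover have "(p - p') / p' = - ((p' - p) / p')"
    by (metis minus_diff_eq minus_divide_left)
  ultimately have "(p' - p) / p' \<le> s' - s"
    by linarith
  with \<open>0 < p'\<close> show ?thesis
    by (simp add: p_def p'_def field_simps)
qed

lemma stationary_point_le_negative:
  assumes "s < 0"
  shows "stationary_point a c m s \<le> c * exp (s / 2) + 2 * a * m / (- s)"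
proof -
  define p where "p = stationary_point a c m s"
  have "0 < p" "ln p - ln c - a * m / p = s"
    using stationary_point_pos stationarity_stationary_point by (simp_all add: p_def stationarity_def)
  have "0 < c * exp (s / 2)" "0 \<le> 2 * a * m / (- s)"
    using a c m assms by (simp_all add: divide_nonneg_neg)
  moreover have "p \<le> 2 * a * m / (- s)" if "c * exp (s / 2) < p"
  proof -
    have "ln (c * exp (s / 2)) < ln p"
      using that c \<open>0 < p\<close> by (subst ln_less_cancel_iff) auto
    then have "- s / 2 < a * m / p"
      using c \<open>ln p - ln c - a * m / p = s\<close> by (simp add: ln_mult)
    then have "p * (- s) \<le> 2 * a * m"
      using \<open>0 < p\<close> by (simp add: less_divide_eq algebra_simps)
    then show ?thesis
      using assms by (subst pos_le_divide_eq) auto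
  qed
  ultimately show ?thesis
    unfolding p_def[symmetric] by (cases "c * exp (s / 2) < p") auto
qed

end

lemma integrable_between:
  fixes f :: "'a \<Rightarrow> real"
  assumes "integrable M l" "integrable M u" "f \<in> borel_measurable M"
    and "AE x in M. l x \<le> f x \<and> f x \<le> u x"
  shows "integrable M f"
proof (rule Bochner_Integration.integrable_bound[where f = "\<lambda>x. \<bar>l x\<bar> + \<bar>u x\<bar>"])
  show "AE x in M. norm (f x) \<le> norm (\<bar>l x\<bar> + \<bar>u x\<bar>)"
    using assms(4) by eventually_elim auto
qed (use assms in auto)

lemma integral_less_AE:
  fixes f g :: "'a \<Rightarrow> real"
  assumes "integrable M f" "integrable M g" "AE x in M. f x \<le> g x"
    and "\<not> (AE x in M. f x = g x)"
  shows "integral\<^sup>L M f < integral\<^sup>L M g"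
proof -
  have "integral\<^sup>L M (\<lambda>x. g x - f x) \<noteq> 0"
  proof
    assume "integral\<^sup>L M (\<lambda>x. g x - f x) = 0"
    then have "AE x in M. g x - f x = 0"
      using integral_nonneg_eq_0_iff_AE[of M "\<lambda>x. g x - f x"] assms(1-3) by auto
    then have "AE x in M. f x = g x"
      by eventually_elim simp
    with assms(4) show False
      by contradiction
  qed
  moreover have "integral\<^sup>L M f \<le> integral\<^sup>L M g"
    using integral_mono_AE[OF assms(1-3)] .
  ultimately show ?thesis
    using assms(1,2) by auto
qed

lemma integrable_of_weighted_sum_le:
  fixes f g :: "'a \<Rightarrow> real"
  assumes "integrable M l" "integrable M l'" "integrable M u"
    and "f \<in> borel_measurable M" "g \<in> borel_measurable M" and "0 < a" "0 < b"
    and "AE x in M. l x \<le> f x \<and> l' x \<le> g x \<and> a * f x + b * g x \<le> u x"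
  shows "integrable M f" and "integrable M g"
proof -
  show "integrable M f"
  proof (rule integrable_between[where l = l and u = "\<lambda>x. (u x - b * l' x) / a"])
    show "integrable M (\<lambda>x. (u x - b * l' x) / a)"
      using assms(2,3) by simp
    show "AE x in M. l x \<le> f x \<and> f x \<le> (u x - b * l' x) / a"
      using assms(8)
    proof eventually_elim
      case (elim x)
      then have "b * l' x \<le> b * g x"
        using \<open>0 < b\<close> by simp
      with elim \<open>0 < a\<close> show ?case
        by (simp add: pos_le_divide_eq mult.commute)
    qed
  qed (use assms in auto)
  show "integrable M g"
  proof (rule integrable_between[where l = l' and u = "\<lambda>x. (u x - a * l x) / b"])
    show "integrable M (\<lambda>x. (u x - a * l x) / b)"
      using assms(1,3) by simp
    show "AE x in M. l' x \<le> g x \<and> g x \<le> (u x - a * l x) / b"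
      using assms(8)
    proof eventually_elim
      case (elim x)
      then have "a * l x \<le> a * f x"
        using \<open>0 < a\<close> by simp
      with elim \<open>0 < b\<close> show ?case
        by (simp add: pos_le_divide_eq mult.commute)
    qed
  qed (use assms in auto)
qed

section \<open>Kullback-Leibler divergence of densities\<close>

abbreviation kl_integrand :: "('a \<Rightarrow> real) \<Rightarrow> ('a \<Rightarrow> real) \<Rightarrow> 'a \<Rightarrow> real" where
  "kl_integrand P Q x \<equiv> P x * ln (P x / Q x)"

lemma kl_integrand_ge:
  assumes "0 \<le> P x" "0 \<le> Q x" "Q x = 0 \<longrightarrow> P x = 0"
  shows "P x - Q x \<le> kl_integrand P Q x"
  using assms xlog_ge_diff[of "P x" "Q x"] by (cases "Q x = 0") auto

lemma
  assumes "prob_density P"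
  shows prob_density_nonneg: "0 \<le> P x"
    and prob_density_measurable: "P \<in> borel_measurable lborel"
    and integrable_prob_density: "integrable lborel P"
    and integral_prob_density: "integral\<^sup>L lborel P = 1"
proof -
  show "0 \<le> P x" and P: "P \<in> borel_measurable lborel"
    using assms by (simp_all add: prob_density_def)
  have "(\<integral>\<^sup>+ x. ennreal (P x) \<partial>lborel) = 1"
    using assms by (simp add: prob_density_def)
  moreover have "\<And>x. 0 \<le> P x"
    using assms by (simp add: prob_density_def)
  ultimately show "integrable lborel P" "integral\<^sup>L lborel P = 1"
    using P by (auto intro: integrableI_nonneg simp: integral_eq_nn_integral)
qed

lemma prob_densityI:
  assumes "integrable lborel P" "integral\<^sup>L lborel P = 1" "\<And>x. 0 \<le> P x"
  shows "prob_density P"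
  using assms nn_integral_eq_integral[OF assms(1)] by (simp add: prob_density_def)

lemma prob_density_mix:
  assumes "prob_density P" "prob_density Q" "0 \<le> t" "t \<le> 1"
  shows "prob_density (\<lambda>x. t * P x + (1 - t) * Q x)"
  using assms by (intro prob_densityI)
    (simp_all add: integrable_prob_density integral_prob_density prob_density_nonneg)

lemma KL_eq_integral:
  assumes "AE x in lborel. Q x = 0 \<longrightarrow> P x = 0" "integrable lborel (kl_integrand P Q)"
  shows "KL P Q = ereal (\<integral>x. kl_integrand P Q x \<partial>lborel)"
proof -
  let ?A = "\<integral>\<^sup>+ x. ennreal (kl_integrand P Q x) \<partial>lborel"
  let ?B = "\<integral>\<^sup>+ x. ennreal (- kl_integrand P Q x) \<partial>lborel"
  have "?A \<noteq> \<infinity>" "?B \<noteq> \<infinity>"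
    using assms(2) by (auto simp: real_integrable_def)
  moreover have "(\<integral>x. kl_integrand P Q x \<partial>lborel) = enn2real ?A - enn2real ?B"
    using real_lebesgue_integral_def[OF assms(2)] by simp
  ultimately show ?thesis
    using assms(1) by (cases ?A; cases ?B) (auto simp: KL_def)
qed

text \<open>The negative part of the integrand is dominated by \<open>Q\<close> (tangent-line bound),
  so a finite divergence forces the positive part to be integrable as well.\<close>

lemma KL_finiteD:
  assumes P: "prob_density P" and Q: "prob_density Q" and "KL P Q < \<infinity>"
  shows "AE x in lborel. Q x = 0 \<longrightarrow> P x = 0" and "integrable lborel (kl_integrand P Q)"
proof -
  show ac: "AE x in lborel. Q x = 0 \<longrightarrow> P x = 0"
    using assms(3) by (auto simp: KL_def split: if_splits)
  let ?A = "\<integral>\<^sup>+ x. ennreal (kl_integrand P Q x) \<partial>lborel"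
  let ?B = "\<integral>\<^sup>+ x. ennreal (- kl_integrand P Q x) \<partial>lborel"
  have "?B \<le> (\<integral>\<^sup>+ x. ennreal (Q x) \<partial>lborel)"
    using ac
  proof (intro nn_integral_mono_AE, eventually_elim)
    case (elim x)
    with kl_integrand_ge[of P x Q] show ?case
      using prob_density_nonneg[OF P, of x] prob_density_nonneg[OF Q, of x] by (intro ennreal_leI) auto
  qed
  also have "\<dots> = 1"
    using Q by (simp add: prob_density_def)
  finally have "?B \<noteq> \<infinity>"
    using neq_top_trans[of 1 ?B] by simp
  moreover have "KL P Q = enn2ereal ?A - enn2ereal ?B"
    using ac by (simp add: KL_def)
  ultimately have "?A \<noteq> \<infinity>"
    using assms(3) by (cases ?B) auto
  note [measurable] = prob_density_measurable[OF P] prob_density_measurable[OF Q]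
  have "kl_integrand P Q \<in> borel_measurable lborel"
    by measurable
  with \<open>?A \<noteq> \<infinity>\<close> \<open>?B \<noteq> \<infinity>\<close> show "integrable lborel (kl_integrand P Q)"
    by (simp add: real_integrable_def)
qed

lemma KL_finite_eq_integral:
  assumes "prob_density P" "prob_density Q" "KL P Q < \<infinity>"
  shows "KL P Q = ereal (\<integral>x. kl_integrand P Q x \<partial>lborel)"
  using KL_eq_integral KL_finiteD[OF assms] by blast

lemma KL_nonneg:
  assumes P: "prob_density P" and Q: "prob_density Q"
  shows "0 \<le> KL P Q"
proof (cases "KL P Q < \<infinity>")
  case True
  note ac = KL_finiteD(1)[OF P Q True] and int = KL_finiteD(2)[OF P Q True]
  have "0 = (\<integral>x. P x - Q x \<partial>lborel)"
    using P Q by (simp add: integrable_prob_density integral_prob_density)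
  also have "\<dots> \<le> (\<integral>x. kl_integrand P Q x \<partial>lborel)"
  proof (rule integral_mono_AE[OF _ int])
    show "integrable lborel (\<lambda>x. P x - Q x)"
      using P Q by (simp add: integrable_prob_density)
    show "AE x in lborel. P x - Q x \<le> kl_integrand P Q x"
      using ac
    proof eventually_elim
      case (elim x)
      then show ?case
        using P Q by (intro kl_integrand_ge) (simp_all add: prob_density_nonneg)
    qed
  qed
  finally show ?thesis
    using KL_eq_integral[OF ac int] by simp
qed (simp add: not_less)

lemma KL_self: "KL P P = 0"
proof -
  have zero: "(\<lambda>x. kl_integrand P P x) = (\<lambda>x. 0)"
    by (simp only: xlog_self)
  have "integrable lborel (kl_integrand P P)"
    unfolding zero by simp
  then have "KL P P = ereal (\<integral>x. kl_integrand P P x \<partial>lborel)"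
    by (intro KL_eq_integral) simp_all
  with zero show ?thesis
    by simp
qed

section \<open>Convexity of the divergence\<close>

lemma kl_integrand_mix_left:
  assumes P: "prob_density P" and Q: "prob_density Q" and R: "prob_density R"
    and finP: "KL P R < \<infinity>" and finQ: "KL Q R < \<infinity>" and t: "0 < t" "t < 1"
  defines "M \<equiv> \<lambda>x. t * P x + (1 - t) * Q x"
  shows "AE x in lborel. kl_integrand M R x \<le> t * kl_integrand P R x + (1 - t) * kl_integrand Q R x"
    and "AE x in lborel. P x \<noteq> Q x \<longrightarrow>
      kl_integrand M R x < t * kl_integrand P R x + (1 - t) * kl_integrand Q R x"
    and "AE x in lborel. R x = 0 \<longrightarrow> M x = 0"
    and "integrable lborel (kl_integrand M R)"
proof -
  have ac: "AE x in lborel. (R x = 0 \<longrightarrow> P x = 0) \<and> (R x = 0 \<longrightarrow> Q x = 0)"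
    using KL_finiteD(1)[OF P R finP] KL_finiteD(1)[OF Q R finQ] by eventually_elim blast
  have nonneg: "0 \<le> P x" "0 \<le> Q x" "0 \<le> R x" for x
    using P Q R by (simp_all add: prob_density_nonneg)
  show le: "AE x in lborel. kl_integrand M R x \<le> t * kl_integrand P R x + (1 - t) * kl_integrand Q R x"
    using ac
  proof eventually_elim
    case (elim x)
    show ?case
    proof (cases "R x = 0")
      case False
      with nonneg(3)[of x] show ?thesis
        using xlog_convex[OF nonneg(1,2) t] by (simp add: M_def)
    qed (use elim in \<open>simp add: M_def\<close>)
  qed
  show "AE x in lborel. P x \<noteq> Q x \<longrightarrow>
      kl_integrand M R x < t * kl_integrand P R x + (1 - t) * kl_integrand Q R x"
    using ac
  proof eventually_elim
    case (elim x)
    show ?case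
    proof (cases "R x = 0")
      case False
      with nonneg(3)[of x] show ?thesis
        using xlog_strictly_convex[OF nonneg(1,2) t] by (simp add: M_def)
    qed (use elim in simp)
  qed
  show "AE x in lborel. R x = 0 \<longrightarrow> M x = 0"
    using ac by eventually_elim (simp add: M_def)
  show "integrable lborel (kl_integrand M R)"
  proof (rule integrable_between)
    show "integrable lborel (\<lambda>x. M x - R x)"
      using P Q R by (simp add: M_def integrable_prob_density)
    show "integrable lborel (\<lambda>x. t * kl_integrand P R x + (1 - t) * kl_integrand Q R x)"
      using KL_finiteD(2)[OF P R finP] KL_finiteD(2)[OF Q R finQ] by simp
    note [measurable] = prob_density_measurable[OF P] prob_density_measurable[OF Q]
      prob_density_measurable[OF R]
    show "kl_integrand M R \<in> borel_measurable lborel"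
      unfolding M_def by measurable
    show "AE x in lborel. M x - R x \<le> kl_integrand M R x
        \<and> kl_integrand M R x \<le> t * kl_integrand P R x + (1 - t) * kl_integrand Q R x"
      using ac le
    proof eventually_elim
      case (elim x)
      moreover have "0 \<le> M x"
        using nonneg t by (simp add: M_def)
      ultimately show ?case
        using nonneg(3)[of x] by (auto simp: M_def intro: kl_integrand_ge)
    qed
  qed
qed

lemma kl_integrand_mix_right:
  assumes \<mu>: "prob_density \<mu>" and P: "prob_density P" and Q: "prob_density Q"
    and finP: "KL \<mu> P < \<infinity>" and finQ: "KL \<mu> Q < \<infinity>" and t: "0 < t" "t < 1"
  defines "M \<equiv> \<lambda>x. t * P x + (1 - t) * Q x"
  shows "AE x in lborel. kl_integrand \<mu> M x \<le> t * kl_integrand \<mu> P x + (1 - t) * kl_integrand \<mu> Q x"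
    and "AE x in lborel. M x = 0 \<longrightarrow> \<mu> x = 0"
    and "integrable lborel (kl_integrand \<mu> M)"
proof -
  have ac: "AE x in lborel. (P x = 0 \<longrightarrow> \<mu> x = 0) \<and> (Q x = 0 \<longrightarrow> \<mu> x = 0)"
    using KL_finiteD(1)[OF \<mu> P finP] KL_finiteD(1)[OF \<mu> Q finQ]
    by eventually_elim blast
  have nonneg: "0 \<le> \<mu> x" "0 \<le> P x" "0 \<le> Q x" for x
    using \<mu> P Q by (simp_all add: prob_density_nonneg)
  show le: "AE x in lborel. kl_integrand \<mu> M x \<le> t * kl_integrand \<mu> P x + (1 - t) * kl_integrand \<mu> Q x"
    using ac
  proof eventually_elim
    case (elim x)
    show ?case
    proof (cases "\<mu> x = 0")
      case False
      with elim nonneg[of x] have "0 < P x" "0 < Q x"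
        by auto
      with xlog_denominator_convex[OF nonneg(1) _ _ t] show ?thesis
        by (simp add: M_def)
    qed simp
  qed
  show ac_M: "AE x in lborel. M x = 0 \<longrightarrow> \<mu> x = 0"
    using ac
  proof eventually_elim
    case (elim x)
    show ?case
    proof
      assume "M x = 0"
      moreover have "0 \<le> t * P x" "0 \<le> (1 - t) * Q x"
        using nonneg t by simp_all
      ultimately have "t * P x = 0"
        unfolding M_def by linarith
      with elim t show "\<mu> x = 0"
        by simp
    qed
  qed
  show "integrable lborel (kl_integrand \<mu> M)"
  proof (rule integrable_between)
    show "integrable lborel (\<lambda>x. \<mu> x - M x)"
      using \<mu> P Q by (simp add: M_def integrable_prob_density)
    show "integrable lborel (\<lambda>x. t * kl_integrand \<mu> P x + (1 - t) * kl_integrand \<mu> Q x)"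
      using KL_finiteD(2)[OF \<mu> P finP] KL_finiteD(2)[OF \<mu> Q finQ] by simp
    note [measurable] = prob_density_measurable[OF \<mu>] prob_density_measurable[OF P]
      prob_density_measurable[OF Q]
    show "kl_integrand \<mu> M \<in> borel_measurable lborel"
      unfolding M_def by measurable
    show "AE x in lborel. \<mu> x - M x \<le> kl_integrand \<mu> M x
        \<and> kl_integrand \<mu> M x \<le> t * kl_integrand \<mu> P x + (1 - t) * kl_integrand \<mu> Q x"
      using ac_M le
    proof eventually_elim
      case (elim x)
      moreover have "0 \<le> M x"
        using nonneg t by (simp add: M_def)
      ultimately show ?case
        using nonneg(1)[of x] by (auto intro: kl_integrand_ge)
    qed
  qed
qed

lemma KL_convex_left:
  assumes P: "prob_density P" and Q: "prob_density Q" and R: "prob_density R"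
    and finP: "KL P R < \<infinity>" and finQ: "KL Q R < \<infinity>" and t: "0 < t" "t < 1"
  shows "KL (\<lambda>x. t * P x + (1 - t) * Q x) R \<le> ereal t * KL P R + ereal (1 - t) * KL Q R"
proof -
  note mix = kl_integrand_mix_left[OF assms]
  note intP = KL_finiteD(2)[OF P R finP] and intQ = KL_finiteD(2)[OF Q R finQ]
  have "(\<integral>x. kl_integrand (\<lambda>x. t * P x + (1 - t) * Q x) R x \<partial>lborel)
      \<le> (\<integral>x. t * kl_integrand P R x + (1 - t) * kl_integrand Q R x \<partial>lborel)"
    using intP intQ by (intro integral_mono_AE mix) simp
  then show ?thesis
    using intP intQ mix(3,4) KL_finiteD(1)[OF P R finP] KL_finiteD(1)[OF Q R finQ]
    by (simp add: KL_eq_integral)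
qed

lemma KL_strictly_convex_left:
  assumes P: "prob_density P" and Q: "prob_density Q" and R: "prob_density R"
    and finP: "KL P R < \<infinity>" and finQ: "KL Q R < \<infinity>" and t: "0 < t" "t < 1"
    and "\<not> (AE x in lborel. P x = Q x)"
  shows "KL (\<lambda>x. t * P x + (1 - t) * Q x) R < ereal t * KL P R + ereal (1 - t) * KL Q R"
proof -
  note mix = kl_integrand_mix_left[OF assms(1-7)]
  note intP = KL_finiteD(2)[OF P R finP] and intQ = KL_finiteD(2)[OF Q R finQ]
  have "\<not> (AE x in lborel. kl_integrand (\<lambda>x. t * P x + (1 - t) * Q x) R x
      = t * kl_integrand P R x + (1 - t) * kl_integrand Q R x)"
  proof
    assume "AE x in lborel. kl_integrand (\<lambda>x. t * P x + (1 - t) * Q x) R x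
      = t * kl_integrand P R x + (1 - t) * kl_integrand Q R x"
    with mix(2) have "AE x in lborel. P x = Q x"
      by eventually_elim auto
    with assms(8) show False
      by contradiction
  qed
  then have "(\<integral>x. kl_integrand (\<lambda>x. t * P x + (1 - t) * Q x) R x \<partial>lborel)
      < (\<integral>x. t * kl_integrand P R x + (1 - t) * kl_integrand Q R x \<partial>lborel)"
    using intP intQ by (intro integral_less_AE mix) simp_all
  then show ?thesis
    using intP intQ mix(3,4) KL_finiteD(1)[OF P R finP] KL_finiteD(1)[OF Q R finQ]
    by (simp add: KL_eq_integral)
qed

lemma KL_convex_right:
  assumes \<mu>: "prob_density \<mu>" and P: "prob_density P" and Q: "prob_density Q"
    and finP: "KL \<mu> P < \<infinity>" and finQ: "KL \<mu> Q < \<infinity>" and t: "0 < t" "t < 1"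
  shows "KL \<mu> (\<lambda>x. t * P x + (1 - t) * Q x) \<le> ereal t * KL \<mu> P + ereal (1 - t) * KL \<mu> Q"
proof -
  note mix = kl_integrand_mix_right[OF assms]
  note intP = KL_finiteD(2)[OF \<mu> P finP] and intQ = KL_finiteD(2)[OF \<mu> Q finQ]
  have "(\<integral>x. kl_integrand \<mu> (\<lambda>x. t * P x + (1 - t) * Q x) x \<partial>lborel)
      \<le> (\<integral>x. t * kl_integrand \<mu> P x + (1 - t) * kl_integrand \<mu> Q x \<partial>lborel)"
    using intP intQ by (intro integral_mono_AE mix) simp
  then show ?thesis
    using intP intQ mix(2,3) KL_finiteD(1)[OF \<mu> P finP] KL_finiteD(1)[OF \<mu> Q finQ]
    by (simp add: KL_eq_integral)
qed

locale jeffreys_problem =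
  fixes pi1 mu1 :: "'a::euclidean_space \<Rightarrow> real" and lam0 lam1 :: real
  assumes pi1: "prob_density pi1" and mu1: "prob_density mu1"
    and pi1_pos: "\<And>x. 0 < pi1 x"
    and KL_mu1_pi1: "KL mu1 pi1 < \<infinity>"
    and lam0: "0 < lam0" and lam1: "0 < lam1"
begin

abbreviation L :: "('a \<Rightarrow> real) \<Rightarrow> ereal" where
  "L \<equiv> LJ lam0 lam1 pi1 mu1"

lemma L_finiteD:
  assumes P: "prob_density P" and "L P < \<infinity>"
  shows "KL P pi1 < \<infinity>" and "KL mu1 P < \<infinity>"
proof -
  have "0 \<le> KL P pi1" "0 \<le> KL mu1 P"
    using KL_nonneg P pi1 mu1 by blast+
  with assms(2) lam0 lam1 show "KL P pi1 < \<infinity>" "KL mu1 P < \<infinity>"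
    by (auto simp: LJ_def less_top[symmetric] ereal_mult_infty)
qed

lemma L_eq_integral:
  assumes P: "prob_density P" and "KL P pi1 < \<infinity>" "KL mu1 P < \<infinity>"
  shows "L P = ereal (lam0 * (\<integral>x. kl_integrand P pi1 x \<partial>lborel)
    + lam1 * (\<integral>x. kl_integrand mu1 P x \<partial>lborel))"
  using KL_finite_eq_integral[OF P pi1 assms(2)] KL_finite_eq_integral[OF mu1 P assms(3)]
  by (simp add: LJ_def)

lemma L_finite_iff:
  assumes "prob_density P"
  shows "L P < \<infinity> \<longleftrightarrow> KL P pi1 < \<infinity> \<and> KL mu1 P < \<infinity>"
  using L_finiteD[OF assms] L_eq_integral[OF assms] by fastforce

lemma L_mix_finite:
  assumes P: "prob_density P" "L P < \<infinity>" and Q: "prob_density Q" "L Q < \<infinity>"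
    and t: "0 < t" "t < 1"
  shows "prob_density (\<lambda>x. t * P x + (1 - t) * Q x) \<and> L (\<lambda>x. t * P x + (1 - t) * Q x) < \<infinity>"
proof
  let ?M = "\<lambda>x. t * P x + (1 - t) * Q x"
  show M: "prob_density ?M"
    using P(1) Q(1) t by (intro prob_density_mix) auto
  note finP = L_finiteD[OF P] and finQ = L_finiteD[OF Q]
  have "KL ?M pi1 < \<infinity>"
  proof -
    have "KL ?M pi1 \<le> ereal t * KL P pi1 + ereal (1 - t) * KL Q pi1"
      using KL_convex_left[OF P(1) Q(1) pi1 finP(1) finQ(1) t] .
    also have "\<dots> < \<infinity>"
      using KL_finite_eq_integral[OF P(1) pi1 finP(1)] KL_finite_eq_integral[OF Q(1) pi1 finQ(1)]
      by simp
    finally show ?thesis .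
  qed
  moreover have "KL mu1 ?M < \<infinity>"
  proof -
    have "KL mu1 ?M \<le> ereal t * KL mu1 P + ereal (1 - t) * KL mu1 Q"
      using KL_convex_right[OF mu1 P(1) Q(1) finP(2) finQ(2) t] .
    also have "\<dots> < \<infinity>"
      using KL_finite_eq_integral[OF mu1 P(1) finP(2)] KL_finite_eq_integral[OF mu1 Q(1) finQ(2)]
      by simp
    finally show ?thesis .
  qed
  ultimately show "L ?M < \<infinity>"
    using L_finite_iff[OF M] by simp
qed

lemma L_finite_realE:
  assumes "prob_density P" "L P < \<infinity>"
  obtains a b where "KL P pi1 = ereal a" "KL mu1 P = ereal b" "L P = ereal (lam0 * a + lam1 * b)"
  using KL_finite_eq_integral[OF assms(1) pi1 L_finiteD(1)[OF assms]]
    KL_finite_eq_integral[OF mu1 assms(1) L_finiteD(2)[OF assms]]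
  by (simp add: LJ_def)

lemma L_strictly_convex:
  assumes P: "prob_density P" "L P < \<infinity>" and Q: "prob_density Q" "L Q < \<infinity>"
    and t: "0 < t" "t < 1" and "\<not> (AE x in lborel. P x = Q x)"
  shows "L (\<lambda>x. t * P x + (1 - t) * Q x) < ereal t * L P + ereal (1 - t) * L Q"
proof -
  let ?M = "\<lambda>x. t * P x + (1 - t) * Q x"
  have M: "prob_density ?M" "L ?M < \<infinity>"
    using L_mix_finite[OF P Q t] by simp_all
  obtain a b where P_eq: "KL P pi1 = ereal a" "KL mu1 P = ereal b" "L P = ereal (lam0 * a + lam1 * b)"
    using L_finite_realE[OF P] .
  obtain a' b' where Q_eq: "KL Q pi1 = ereal a'" "KL mu1 Q = ereal b'"
      "L Q = ereal (lam0 * a' + lam1 * b')"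
    using L_finite_realE[OF Q] .
  obtain c d where M_eq: "KL ?M pi1 = ereal c" "KL mu1 ?M = ereal d" "L ?M = ereal (lam0 * c + lam1 * d)"
    using L_finite_realE[OF M] .
  have "c < t * a + (1 - t) * a'"
    using KL_strictly_convex_left[OF P(1) Q(1) pi1 L_finiteD(1)[OF P] L_finiteD(1)[OF Q] t assms(7)]
    by (simp add: P_eq Q_eq M_eq)
  then have "lam0 * c < lam0 * (t * a + (1 - t) * a')"
    using lam0 by simp
  moreover have "d \<le> t * b + (1 - t) * b'"
    using KL_convex_right[OF mu1 P(1) Q(1) L_finiteD(2)[OF P] L_finiteD(2)[OF Q] t]
    by (simp add: P_eq Q_eq M_eq)
  then have "lam1 * d \<le> lam1 * (t * b + (1 - t) * b')"
    using lam1 by simp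
  ultimately have "lam0 * c + lam1 * d < t * (lam0 * a + lam1 * b) + (1 - t) * (lam0 * a' + lam1 * b')"
    by (simp add: algebra_simps)
  then show ?thesis
    by (simp add: P_eq Q_eq M_eq)
qed

subsection \<open>Construction of the minimiser\<close>

lemma mu1_nonneg: "0 \<le> mu1 x"
  using mu1 by (rule prob_density_nonneg)

definition ratio :: real where
  "ratio = lam1 / lam0"

lemma ratio_nonneg: "0 \<le> ratio"
  using lam0 lam1 by (simp add: ratio_def)

lemma lam0_ratio: "lam0 * ratio = lam1"
  using lam0 by (simp add: ratio_def)

definition stationary_density :: "real \<Rightarrow> 'a \<Rightarrow> real" where
  "stationary_density s x = stationary_point ratio (pi1 x) (mu1 x) s"

context
  fixes s :: real and x :: 'a
begin

lemma stationary_density_pos: "0 < stationary_density s x"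
  unfolding stationary_density_def by (rule stationary_point_pos[OF ratio_nonneg pi1_pos mu1_nonneg])

lemma stationarity_stationary_density:
  "stationarity ratio (pi1 x) (mu1 x) (stationary_density s x) = s"
  unfolding stationary_density_def
  by (rule stationarity_stationary_point[OF ratio_nonneg pi1_pos mu1_nonneg])

lemma stationary_density_lower: "pi1 x * exp s \<le> stationary_density s x"
  unfolding stationary_density_def by (rule stationary_point_lower[OF ratio_nonneg pi1_pos mu1_nonneg])

lemma stationary_density_upper: "stationary_density s x \<le> pi1 x * exp (s + 1) + ratio * mu1 x"
  unfolding stationary_density_def by (rule stationary_point_upper[OF ratio_nonneg pi1_pos mu1_nonneg])

lemma stationary_density_mono: "s \<le> s' \<Longrightarrow> stationary_density s x \<le> stationary_density s' x"
  unfolding stationary_density_def by (rule stationary_point_mono[OF ratio_nonneg pi1_pos mu1_nonneg])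

lemma stationary_density_increment:
  "s \<le> s' \<Longrightarrow> stationary_density s' x - stationary_density s x \<le> stationary_density s' x * (s' - s)"
  unfolding stationary_density_def
  by (rule stationary_point_increment[OF ratio_nonneg pi1_pos mu1_nonneg])

lemma stationary_density_le_negative:
  "s < 0 \<Longrightarrow> stationary_density s x \<le> pi1 x * exp (s / 2) + 2 * ratio * mu1 x / (- s)"
  unfolding stationary_density_def
  by (rule stationary_point_le_negative[OF ratio_nonneg pi1_pos mu1_nonneg])

lemma stationary_density_le_iff:
  "0 < c \<Longrightarrow> stationary_density s x \<le> c \<longleftrightarrow> s \<le> stationarity ratio (pi1 x) (mu1 x) c"
  unfolding stationary_density_def
  by (rule stationary_point_le_iff[OF ratio_nonneg pi1_pos mu1_nonneg])

end

lemma stationary_density_measurable [measurable]: "stationary_density s \<in> borel_measurable lborel"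
proof (subst borel_measurable_iff_le, intro allI)
  fix c :: real
  note [measurable] = prob_density_measurable[OF pi1] prob_density_measurable[OF mu1]
  show "{x \<in> space lborel. stationary_density s x \<le> c} \<in> sets lborel"
  proof (cases "0 < c")
    case True
    then have "{x \<in> space lborel. stationary_density s x \<le> c}
        = {x \<in> space lborel. s \<le> ln c - ln (pi1 x) - ratio * mu1 x / c}"
      by (auto simp: stationary_density_le_iff stationarity_def)
    also have "\<dots> \<in> sets lborel"
      by measurable
    finally show ?thesis .
  next
    case False
    then have "c < stationary_density s x" for x
      using stationary_density_pos[of s x] by linarith
    then have "{x \<in> space lborel. stationary_density s x \<le> c} = {}"
      by (simp add: not_le)
    then show ?thesis
      by simp
  qed
qed

lemma integrable_stationary_density: "integrable lborel (stationary_density s)"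
proof (rule integrable_between[where l = "\<lambda>x. 0"])
  show "integrable lborel (\<lambda>x. pi1 x * exp (s + 1) + ratio * mu1 x)"
    using integrable_prob_density[OF pi1] integrable_prob_density[OF mu1] by simp
  show "AE x in lborel. 0 \<le> stationary_density s x
      \<and> stationary_density s x \<le> pi1 x * exp (s + 1) + ratio * mu1 x"
    using stationary_density_pos[of s] stationary_density_upper[of s] by (simp add: less_imp_le)
qed simp_all

definition mass :: "real \<Rightarrow> real" where
  "mass s = (\<integral>x. stationary_density s x \<partial>lborel)"

lemma mass_mono: "s \<le> s' \<Longrightarrow> mass s \<le> mass s'"
  unfolding mass_def by (intro integral_mono integrable_stationary_density stationary_density_mono)

lemma mass_increment:
  assumes "s \<le> s'"
  shows "mass s' - mass s \<le> mass s' * (s' - s)"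
proof -
  have "(\<integral>x. stationary_density s' x - stationary_density s x \<partial>lborel)
      \<le> (\<integral>x. stationary_density s' x * (s' - s) \<partial>lborel)"
    using stationary_density_increment[OF assms]
    by (intro integral_mono integrable_stationary_density Bochner_Integration.integrable_diff
        integrable_mult_left)
  then show ?thesis
    by (simp add: mass_def integrable_stationary_density)
qed

lemma mass_continuous: "continuous_on {..b} mass"
proof (rule lipschitz_on_continuous_on)
  show "(mass b)-lipschitz_on {..b} mass"
  proof (rule lipschitz_onI)
    have "\<bar>mass s' - mass s\<bar> \<le> mass b * (s' - s)" if "s \<le> s'" "s' \<le> b" for s s'
    proof -
      have "mass s' * (s' - s) \<le> mass b * (s' - s)"
        using mass_mono[of s' b] that by (intro mult_right_mono) auto
      with mass_mono[OF \<open>s \<le> s'\<close>] mass_increment[OF \<open>s \<le> s'\<close>] show ?thesis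
        by simp
    qed
    then show "dist (mass s) (mass s') \<le> mass b * dist s s'" if "s \<in> {..b}" "s' \<in> {..b}" for s s'
      using that by (cases "s \<le> s'") (force simp: dist_real_def abs_minus_commute)+
    show "0 \<le> mass b"
      unfolding mass_def using stationary_density_pos by (simp add: less_imp_le)
  qed
qed

lemma one_le_mass_zero: "1 \<le> mass 0"
proof -
  have "integral\<^sup>L lborel pi1 \<le> mass 0"
    unfolding mass_def using stationary_density_lower[of _ 0]
    by (intro integral_mono integrable_stationary_density integrable_prob_density[OF pi1]) simp
  then show ?thesis
    by (simp add: integral_prob_density[OF pi1])
qed

lemma mass_le_one: "mass (- (4 * ratio + 4)) \<le> 1"
proof -
  define K where "K = 4 * ratio + 4"
  have "0 < K"
    using ratio_nonneg by (simp add: K_def)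
  have "mass (- K) \<le> (\<integral>x. pi1 x * exp (- K / 2) + 2 * ratio * mu1 x / K \<partial>lborel)"
    unfolding mass_def using stationary_density_le_negative[of "- K"] \<open>0 < K\<close>
    by (intro integral_mono integrable_stationary_density)
      (simp_all add: integrable_prob_density[OF pi1] integrable_prob_density[OF mu1])
  also have "\<dots> = exp (- K / 2) + 2 * ratio / K"
    by (simp add: integrable_prob_density[OF pi1] integrable_prob_density[OF mu1]
        integral_prob_density[OF pi1] integral_prob_density[OF mu1])
  also have "\<dots> \<le> 1 / 2 + 1 / 2"
  proof (rule add_mono)
    have "2 \<le> 1 + K / 2"
      using ratio_nonneg by (simp add: K_def)
    also have "\<dots> \<le> exp (K / 2)"
      by (rule exp_ge_add_one_self)
    finally have "2 \<le> exp (K / 2)" .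
    then show "exp (- K / 2) \<le> 1 / 2"
      by (simp add: exp_minus field_simps)
    show "2 * ratio / K \<le> 1 / 2"
      using ratio_nonneg \<open>0 < K\<close> by (simp add: K_def field_simps)
  qed
  finally show ?thesis
    by (simp add: K_def)
qed

lemma mass_eq_one_exists: "\<exists>s. mass s = 1"
proof -
  have "- (4 * ratio + 4) \<le> 0"
    using ratio_nonneg by simp
  then show ?thesis
    using IVT'[of mass "- (4 * ratio + 4)" 1 0] mass_le_one one_le_mass_zero
      continuous_on_subset[OF mass_continuous[of 0]]
    by force
qed

text \<open>\<open>lam0 * (multiplier + 1)\<close> is the Lagrange multiplier of the constraint
  \<open>\<integral> P = 1\<close>.\<close>

definition multiplier :: real where
  "multiplier = (SOME s. mass s = 1)"

definition minimizer :: "'a \<Rightarrow> real" where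
  "minimizer = stationary_density multiplier"

lemma minimizer_pos: "0 < minimizer x"
  by (simp add: minimizer_def stationary_density_pos)

lemma minimizer_measurable [measurable]: "minimizer \<in> borel_measurable lborel"
  by (simp add: minimizer_def)

lemma prob_density_minimizer: "prob_density minimizer"
proof (rule prob_densityI)
  show "integrable lborel minimizer"
    by (simp add: minimizer_def integrable_stationary_density)
  show "integral\<^sup>L lborel minimizer = 1"
    using someI_ex[OF mass_eq_one_exists] by (simp add: minimizer_def multiplier_def mass_def)
  show "0 \<le> minimizer x" for x
    using minimizer_pos less_imp_le by blast
qed

lemma minimizer_support:
  assumes "0 \<le> q" "q = 0 \<longrightarrow> mu1 x = 0"
  shows "lam0 * kl_integrand minimizer pi1 x + lam1 * kl_integrand mu1 minimizer x
      + lam0 * (multiplier + 1) * (q - minimizer x)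
    \<le> lam0 * (q * ln (q / pi1 x)) + lam1 * (mu1 x * ln (mu1 x / q))"
proof -
  have "kl_integrand minimizer pi1 x + ratio * kl_integrand mu1 minimizer x
      + (multiplier + 1) * (q - minimizer x)
    \<le> q * ln (q / pi1 x) + ratio * (mu1 x * ln (mu1 x / q))"
    using jeffreys_integrand_support[OF ratio_nonneg pi1_pos[of x] mu1_nonneg[of x]
        minimizer_pos[of x] assms]
    by (simp only: minimizer_def stationarity_stationary_density)
  from mult_left_mono[OF this less_imp_le[OF lam0]] show ?thesis
    by (simp only: distrib_left mult.assoc[symmetric] lam0_ratio)
qed

lemma integrable_kl_minimizer:
  shows "integrable lborel (kl_integrand minimizer pi1)"
    and "integrable lborel (kl_integrand mu1 minimizer)"
proof -
  note [measurable] = prob_density_measurable[OF pi1] prob_density_measurable[OF mu1]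
  have lower: "integrable lborel (\<lambda>x. minimizer x - pi1 x)"
    "integrable lborel (\<lambda>x. mu1 x - minimizer x)"
    using integrable_prob_density[OF pi1] integrable_prob_density[OF mu1]
      integrable_prob_density[OF prob_density_minimizer]
    by simp_all
  have upper: "integrable lborel (\<lambda>x. lam0 * kl_integrand mu1 pi1 x
      - lam0 * (multiplier + 1) * (mu1 x - minimizer x))"
    using KL_finiteD(2)[OF mu1 pi1 KL_mu1_pi1] lower(2) by simp
  have bounds: "AE x in lborel. minimizer x - pi1 x \<le> kl_integrand minimizer pi1 x
      \<and> mu1 x - minimizer x \<le> kl_integrand mu1 minimizer x
      \<and> lam0 * kl_integrand minimizer pi1 x + lam1 * kl_integrand mu1 minimizer x
        \<le> lam0 * kl_integrand mu1 pi1 x - lam0 * (multiplier + 1) * (mu1 x - minimizer x)"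
  proof (intro AE_I2 conjI)
    fix x
    show "minimizer x - pi1 x \<le> kl_integrand minimizer pi1 x"
      using minimizer_pos[of x] pi1_pos[of x] by (intro kl_integrand_ge) auto
    show "mu1 x - minimizer x \<le> kl_integrand mu1 minimizer x"
      using minimizer_pos[of x] mu1_nonneg[of x] by (intro kl_integrand_ge) auto
    show "lam0 * kl_integrand minimizer pi1 x + lam1 * kl_integrand mu1 minimizer x
        \<le> lam0 * kl_integrand mu1 pi1 x - lam0 * (multiplier + 1) * (mu1 x - minimizer x)"
      using minimizer_support[of "mu1 x" x, OF mu1_nonneg]
      by (simp only: xlog_self mult_zero_right add_0_right simp_thms True_implies_equals)
  qed
  have "kl_integrand minimizer pi1 \<in> borel_measurable lborel"
    by measurable
  moreover have "kl_integrand mu1 minimizer \<in> borel_measurable lborel"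
    by measurable
  ultimately show "integrable lborel (kl_integrand minimizer pi1)"
    and "integrable lborel (kl_integrand mu1 minimizer)"
    using integrable_of_weighted_sum_le[OF lower upper _ _ lam0 lam1 bounds] by blast+
qed

lemma KL_minimizer_finite: "KL minimizer pi1 < \<infinity>" "KL mu1 minimizer < \<infinity>"
  using KL_eq_integral[OF _ integrable_kl_minimizer(1)] KL_eq_integral[OF _ integrable_kl_minimizer(2)]
    pi1_pos minimizer_pos by (simp_all add: less_imp_neq[symmetric])

lemma L_minimizer_finite: "L minimizer < \<infinity>"
  using L_finite_iff[OF prob_density_minimizer] KL_minimizer_finite by simp

lemma L_minimizer_le:
  assumes Q: "prob_density Q"
  shows "L minimizer \<le> L Q"
proof (cases "L Q < \<infinity>")
  case True
  note finQ = L_finiteD[OF Q True]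
  note intQ = KL_finiteD(2)[OF Q pi1 finQ(1)] KL_finiteD(2)[OF mu1 Q finQ(2)]
  have "(\<integral>x. lam0 * kl_integrand minimizer pi1 x + lam1 * kl_integrand mu1 minimizer x
        + lam0 * (multiplier + 1) * (Q x - minimizer x) \<partial>lborel)
      \<le> (\<integral>x. lam0 * kl_integrand Q pi1 x + lam1 * kl_integrand mu1 Q x \<partial>lborel)"
  proof (rule integral_mono_AE)
    show "AE x in lborel. lam0 * kl_integrand minimizer pi1 x + lam1 * kl_integrand mu1 minimizer x
        + lam0 * (multiplier + 1) * (Q x - minimizer x)
      \<le> lam0 * kl_integrand Q pi1 x + lam1 * kl_integrand mu1 Q x"
      using KL_finiteD(1)[OF mu1 Q finQ(2)]
      by eventually_elim (rule minimizer_support[OF prob_density_nonneg[OF Q]])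
  qed (use intQ integrable_kl_minimizer integrable_prob_density[OF Q]
      integrable_prob_density[OF prob_density_minimizer] in simp_all)
  then have "lam0 * (\<integral>x. kl_integrand minimizer pi1 x \<partial>lborel)
        + lam1 * (\<integral>x. kl_integrand mu1 minimizer x \<partial>lborel)
      \<le> lam0 * (\<integral>x. kl_integrand Q pi1 x \<partial>lborel) + lam1 * (\<integral>x. kl_integrand mu1 Q x \<partial>lborel)"
    using intQ integrable_kl_minimizer integrable_prob_density[OF Q]
      integrable_prob_density[OF prob_density_minimizer]
    by (simp add: integral_prob_density[OF Q] integral_prob_density[OF prob_density_minimizer])
  then show ?thesis
    using L_eq_integral[OF prob_density_minimizer KL_minimizer_finite] L_eq_integral[OF Q finQ]
    by simp
qed (simp add: not_less top_unique)

lemma minimizer_unique: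
  assumes P: "prob_density P" and minimal: "\<And>Q. prob_density Q \<Longrightarrow> L P \<le> L Q"
  shows "AE x in lborel. P x = minimizer x"
proof (rule ccontr)
  assume neq: "\<not> (AE x in lborel. P x = minimizer x)"
  note fin = L_minimizer_finite
  have eq: "L P = L minimizer"
    using minimal[OF prob_density_minimizer] L_minimizer_le[OF P] by simp
  with fin have "L P < \<infinity>"
    by simp
  let ?M = "\<lambda>x. 1 / 2 * P x + (1 - 1 / 2) * minimizer x"
  have "prob_density ?M"
    using L_mix_finite[OF P \<open>L P < \<infinity>\<close> prob_density_minimizer fin, of "1 / 2"] by simp
  then have "L minimizer \<le> L ?M"
    by (rule L_minimizer_le)
  also have "\<dots> < ereal (1 / 2) * L P + ereal (1 - 1 / 2) * L minimizer"
    using L_strictly_convex[OF P \<open>L P < \<infinity>\<close> prob_density_minimizer fin, of "1 / 2"] neq by simp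
  also have "\<dots> = L minimizer"
  proof -
    obtain a b where "L minimizer = ereal (lam0 * a + lam1 * b)"
      using L_finite_realE[OF prob_density_minimizer fin] .
    with eq show ?thesis
      by simp
  qed
  finally show False
    by simp
qed

lemma KL_minimizer_le: "KL minimizer pi1 \<le> KL mu1 pi1"
proof -
  have fin_mu1: "L mu1 < \<infinity>"
    using L_finite_iff[OF mu1] KL_mu1_pi1 KL_self[of mu1] by simp
  obtain a b where a: "KL minimizer pi1 = ereal a" and b: "KL mu1 minimizer = ereal b"
      and "L minimizer = ereal (lam0 * a + lam1 * b)"
    using L_finite_realE[OF prob_density_minimizer L_minimizer_finite] .
  obtain k b' where k: "KL mu1 pi1 = ereal k" and "KL mu1 mu1 = ereal b'"
      and "L mu1 = ereal (lam0 * k + lam1 * b')"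
    using L_finite_realE[OF mu1 fin_mu1] .
  moreover have "b' = 0"
    using \<open>KL mu1 mu1 = ereal b'\<close> KL_self[of mu1] by simp
  moreover have "0 \<le> lam1 * b"
    using KL_nonneg[OF mu1 prob_density_minimizer] b lam1 by simp
  ultimately have "lam0 * a \<le> lam0 * k"
    using L_minimizer_le[OF mu1] \<open>L minimizer = ereal (lam0 * a + lam1 * b)\<close> by simp
  then show ?thesis
    using lam0 a k by simp
qed

end

theorem theorem1:
  fixes pi1 mu1 :: "'a::euclidean_space \<Rightarrow> real" and lam0 lam1 :: real
  assumes "prob_density pi1" and "prob_density mu1"
    and "\<forall>x. pi1 x > 0"
    and "KL mu1 pi1 < \<infinity>"
    and "lam0 > 0" and "lam1 > 0"
  shows
    "(\<forall>P Q t. prob_density P \<and> LJ lam0 lam1 pi1 mu1 P < \<infinity>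
        \<and> prob_density Q \<and> LJ lam0 lam1 pi1 mu1 Q < \<infinity> \<and> 0 < t \<and> t < 1 \<longrightarrow>
        prob_density (\<lambda>x. t * P x + (1 - t) * Q x)
        \<and> LJ lam0 lam1 pi1 mu1 (\<lambda>x. t * P x + (1 - t) * Q x) < \<infinity>)
   \<and> (\<forall>P Q t. prob_density P \<and> LJ lam0 lam1 pi1 mu1 P < \<infinity>
        \<and> prob_density Q \<and> LJ lam0 lam1 pi1 mu1 Q < \<infinity> \<and> 0 < t \<and> t < 1
        \<and> \<not> (AE x in lborel. P x = Q x) \<longrightarrow>
        LJ lam0 lam1 pi1 mu1 (\<lambda>x. t * P x + (1 - t) * Q x)
          < ereal t * LJ lam0 lam1 pi1 mu1 P + ereal (1 - t) * LJ lam0 lam1 pi1 mu1 Q)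
   \<and> (\<exists>Pstar. prob_density Pstar
        \<and> (\<forall>P. prob_density P \<longrightarrow> LJ lam0 lam1 pi1 mu1 Pstar \<le> LJ lam0 lam1 pi1 mu1 P)
        \<and> (\<forall>P. prob_density P \<and> (\<forall>Q. prob_density Q \<longrightarrow>
                 LJ lam0 lam1 pi1 mu1 P \<le> LJ lam0 lam1 pi1 mu1 Q)
               \<longrightarrow> (AE x in lborel. P x = Pstar x))
        \<and> KL Pstar pi1 \<le> KL mu1 pi1)"
proof -
  interpret jeffreys_problem pi1 mu1 lam0 lam1
    using assms by unfold_locales auto
  show ?thesis
    using L_mix_finite L_strictly_convex
      prob_density_minimizer L_minimizer_le minimizer_unique KL_minimizer_le
    by (intro conjI) blast+
qed

end
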